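(* Let $A,B$ be disjoint infinite sets, $\mathcal M=A\cup B$, and define a metric $\delta$ on $\mathcal M$ by $\delta(x,x)=0$, $\delta(x,y)=1$ if $x,y$ lie in different sets among $A,B$, and $\delta(x,y)=2$ if $x\ne y$ lie in the same set. Then for every strictly increasing function $\delta^*:[0,\infty)\to[0,\infty)$ with $\delta^*(0)=0$, the function $\delta^*\circ\delta$ on $\mathcal M\times\mathcal M$ is not of negative type.
   Context: A symmetric function $\rho:\mathcal M\times\mathcal M\to[0,\infty)$ with $\rho(x,x)=0$ is of negative type if for every $n\ge1$, all points $x_1,\dots,x_n\in\mathcal M$ and all real $a_1,\dots,a_n$ with $\sum_i a_i=0$ one has $\sum_{i,j}a_ia_j\,\rho(x_i,x_j)\le0$. *)

theory Defs
  imports Main Complex_Main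
begin

definition negative_type :: "'a set \<Rightarrow> ('a \<Rightarrow> 'a \<Rightarrow> real) \<Rightarrow> bool" where
  "negative_type M \<rho> \<longleftrightarrow>
     (\<forall>n::nat. n \<ge> 1 \<longrightarrow> (\<forall>(x::nat \<Rightarrow> 'a) (a::nat \<Rightarrow> real).
        (\<forall>i<n. x i \<in> M) \<and> (\<Sum>i<n. a i) = 0 \<longrightarrow>
        (\<Sum>i<n. \<Sum>j<n. a i * a j * \<rho> (x i) (x j)) \<le> 0))"

definition two_set_metric :: "'a set \<Rightarrow> 'a set \<Rightarrow> 'a \<Rightarrow> 'a \<Rightarrow> real" where
  "two_set_metric A B x y =
     (if x = y then 0
      else if (x \<in> A \<and> y \<in> B) \<or> (x \<in> B \<and> y \<in> A) then 1
      else 2)"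

end

theory Submission
  imports Defs
begin

text \<open>Take m points of A and m points of B, with weights 1 on the A-points and -1 on the
  B-points. Writing p = f 1 and q = f 2, the quadratic form equals
  2m((m-1)q - mp) = 2m(m(q-p) - q), which is positive for large m because q > p
  by strict monotonicity.\<close>

lemma sum_lessThan_add_split:
  "(\<Sum>i<m + k. g i) = (\<Sum>i<m. g i) + (\<Sum>i<k. g (m + i))" for g :: "nat \<Rightarrow> 'b::comm_monoid_add"
  by (induction k) (simp_all add: add.assoc)

lemma sum_off_diagonal_const:
  assumes "i < m"
  shows "(\<Sum>j<m. if i = j then 0 else c) = (real m - 1) * (c::real)"
proof -
  have "(\<Sum>j<m. if i = j then 0 else c) = (\<Sum>j\<in>{..<m} - {i}. c)"
    using assms by (simp add: sum.remove[of _ i] sum.cong)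
  then show ?thesis
    using assms by (simp add: of_nat_diff)
qed

lemma negative_type_two_cliques:
  fixes \<rho> :: "'a \<Rightarrow> 'a \<Rightarrow> real" and u v :: "nat \<Rightarrow> 'a"
  assumes nt: "negative_type M \<rho>"
    and in_M: "\<And>i. u i \<in> M" "\<And>i. v i \<in> M"
    and uu: "\<And>i j. \<rho> (u i) (u j) = (if i = j then 0 else q)"
    and vv: "\<And>i j. \<rho> (v i) (v j) = (if i = j then 0 else q)"
    and uv: "\<And>i j. \<rho> (u i) (v j) = p"
    and vu: "\<And>i j. \<rho> (v i) (u j) = p"
  shows "real m * ((real m - 1) * q - real m * p) \<le> 0"
proof (cases "m = 0")
  case False
  define x where "x i = (if i < m then u i else v (i - m))" for i
  define a :: "nat \<Rightarrow> real" where "a i = (if i < m then 1 else -1)" for i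
  have row_u: "(\<Sum>j<m + m. a i * a j * \<rho> (x i) (x j)) = (real m - 1) * q - real m * p"
    if "i < m" for i
    using that by (simp add: sum_lessThan_add_split a_def x_def uu uv sum_off_diagonal_const)
  have row_v: "(\<Sum>j<m + m. a (m + i) * a j * \<rho> (x (m + i)) (x j)) = (real m - 1) * q - real m * p"
    if "i < m" for i
    using that by (simp add: sum_lessThan_add_split a_def x_def vv vu sum_off_diagonal_const)
  have "(\<Sum>i<m + m. \<Sum>j<m + m. a i * a j * \<rho> (x i) (x j))
      = (\<Sum>i<m. \<Sum>j<m + m. a i * a j * \<rho> (x i) (x j))
        + (\<Sum>i<m. \<Sum>j<m + m. a (m + i) * a j * \<rho> (x (m + i)) (x j))"
    by (rule sum_lessThan_add_split)
  also have "\<dots> = 2 * (real m * ((real m - 1) * q - real m * p))"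
    by (simp add: row_u row_v)
  moreover have "(\<Sum>i<m + m. \<Sum>j<m + m. a i * a j * \<rho> (x i) (x j)) \<le> 0"
  proof -
    have "\<forall>i<m + m. x i \<in> M" using in_M by (simp add: x_def)
    moreover have "(\<Sum>i<m + m. a i) = 0" by (simp add: a_def sum_lessThan_add_split)
    ultimately show ?thesis
      using nt False unfolding negative_type_def by auto
  qed
  ultimately show ?thesis by linarith
qed simp

theorem mainTheorem10:
  fixes A B :: "'a set" and f :: "real \<Rightarrow> real"
  assumes "A \<inter> B = {}" and "infinite A" and "infinite B"
    and "strict_mono_on {0..} f" and "\<forall>t\<ge>0. f t \<ge> 0" and "f 0 = 0"
  shows "\<not> negative_type (A \<union> B) (\<lambda>x y. f (two_set_metric A B x y))"
proof
  assume nt: "negative_type (A \<union> B) (\<lambda>x y. f (two_set_metric A B x y))"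
  obtain u :: "nat \<Rightarrow> 'a" where u: "inj u" "range u \<subseteq> A"
    using infinite_countable_subset assms(2) by blast
  obtain v :: "nat \<Rightarrow> 'a" where v: "inj v" "range v \<subseteq> B"
    using infinite_countable_subset assms(3) by blast
  have "f 0 < f 1" "f 1 < f 2"
    using assms(4) by (auto intro: strict_mono_onD)
  then obtain m :: nat where m: "f 2 < real m * (f 2 - f 1)"
    using ex_less_of_nat_mult[of "f 2 - f 1" "f 2"] by auto
  let ?\<rho> = "\<lambda>x y. f (two_set_metric A B x y)"
  have uu: "?\<rho> (u i) (u j) = (if i = j then 0 else f 2)"
    and vv: "?\<rho> (v i) (v j) = (if i = j then 0 else f 2)"
    and uv: "?\<rho> (u i) (v j) = f 1" and vu: "?\<rho> (v i) (u j) = f 1" for i j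
    using u v assms(1,6) by (auto simp: two_set_metric_def inj_eq)
  have "real m * ((real m - 1) * f 2 - real m * f 1) \<le> 0"
    using u v by (intro negative_type_two_cliques[OF nt _ _ uu vv uv vu]) auto
  moreover have "0 < real m * ((real m - 1) * f 2 - real m * f 1)"
    using m \<open>f 0 < f 1\<close> assms(6) \<open>f 1 < f 2\<close>
    by (intro mult_pos_pos) (auto simp: algebra_simps intro!: Nat.gr0I)
  ultimately show False by linarith
qed

end
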